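(* For all positive integers $n,d,k$, the value of the multiple-treasures-per-door search game satisfies $v_M(n,d,k)\le \frac kn$.
   Context: Multiple-treasures-per-door search game with parameters $(n,d,k)$: the hider places $d$ treasures behind $n$ doors, several treasures allowed behind the same door. In each round the searcher selects at most $k$ doors; if none of them hides a treasure not yet found, she loses; otherwise the hider reveals one not-yet-found treasure behind one of the selected doors (hider's choice). The searcher wins if she finds all $d$ treasures with a total of $d$ guesses. Players may randomize and the searcher may adapt to previous answers; $v_M(n,d,k)$ is the probability the searcher wins under optimal play by both. *)

theory Defs
  imports "HOL-Probability.Probability_Mass_Function"
begin

text \<open>A history is the list of doors at which
  treasures have been revealed so far (in order).  A pure hider
  strategy is a placement c (c x = number of treasures behind door x) together
  with a response rule r: given the history and the selected set, the door
  behind which a not-yet-found treasure is revealed.\<close>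

type_synonym searcher = "nat list \<Rightarrow> nat set"
type_synonym hider = "(nat \<Rightarrow> nat) \<times> (nat list \<Rightarrow> nat set \<Rightarrow> nat)"

fun play :: "searcher \<Rightarrow> (nat \<Rightarrow> nat) \<Rightarrow> (nat list \<Rightarrow> nat set \<Rightarrow> nat)
               \<Rightarrow> nat \<Rightarrow> nat list \<Rightarrow> bool" where
  "play s c r 0 h = True"
| "play s c r (Suc m) h =
     (if \<exists>x\<in>s h. count_list h x < c x
      then play s c r m (h @ [r h (s h)]) else False)"

definition searcher_wins :: "nat \<Rightarrow> searcher \<Rightarrow> hider \<Rightarrow> bool" where
  "searcher_wins d s hc = play s (fst hc) (snd hc) d []"

definition valid_searcher :: "nat \<Rightarrow> nat \<Rightarrow> searcher set" where
  "valid_searcher n k = {s. \<forall>h. s h \<subseteq> {..<n} \<and> card (s h) \<le> k}"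

definition valid_hider :: "nat \<Rightarrow> nat \<Rightarrow> hider set" where
  "valid_hider n d = {(c, r).
      (\<forall>x\<ge>n. c x = 0) \<and> (\<Sum>x<n. c x) = d \<and>
      (\<forall>h S. (\<exists>x\<in>S. count_list h x < c x) \<longrightarrow>
              r h S \<in> S \<and> count_list h (r h S) < c (r h S))}"

text \<open>Value of the game: the best winning probability the searcher can guarantee
  with a mixed strategy against every mixed hider strategy (max-min value; the
  game is finite, so it equals the minimax value).\<close>
definition vM :: "nat \<Rightarrow> nat \<Rightarrow> nat \<Rightarrow> real" where
  "vM n d k =
     (SUP \<sigma>\<in>{\<sigma>. set_pmf \<sigma> \<subseteq> valid_searcher n k}.
        INF \<tau>\<in>{\<tau>. set_pmf \<tau> \<subseteq> valid_hider n d}.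
           measure_pmf.prob (pair_pmf \<sigma> \<tau>) {(s, hc). searcher_wins d s hc})"

end

theory Submission
  imports Defs
begin

text \<open>The hider puts all d treasures behind one door chosen uniformly at random.
  The searcher can only win if that door is among the at most k doors of her
  first round, which happens with probability at most k/n whatever she does.\<close>

definition concentrated_hider :: "nat \<Rightarrow> nat \<Rightarrow> hider" where
  "concentrated_hider d x = ((\<lambda>y. if y = x then d else 0), (\<lambda>h S. x))"

lemma concentrated_hider_valid:
  "x < n \<Longrightarrow> concentrated_hider d x \<in> valid_hider n d"
  unfolding valid_hider_def concentrated_hider_def
  by (auto simp: if_distrib sum.delta split: if_splits)

lemma searcher_wins_concentrated_hider_imp_first_guess:
  assumes "0 < d" and "searcher_wins d s (concentrated_hider d x)"
  shows "x \<in> s []"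
  using assms unfolding searcher_wins_def concentrated_hider_def
  by (cases d) (auto split: if_splits)

lemma measure_pair_pmf_le:
  assumes "\<And>x. x \<in> set_pmf p \<Longrightarrow> measure_pmf.prob q {y. (x, y) \<in> A} \<le> b"
  shows "measure_pmf.prob (pair_pmf p q) A \<le> b"
proof -
  obtain x0 where "x0 \<in> set_pmf p"
    by (meson all_not_in_conv set_pmf_not_empty)
  then have b_nonneg: "0 \<le> b"
    using assms measure_nonneg order_trans by blast
  have "pair_pmf p q = bind_pmf p (\<lambda>x. map_pmf (Pair x) q)"
    by (simp add: pair_pmf_def map_pmf_def)
  then have "emeasure (pair_pmf p q) A = (\<integral>\<^sup>+x. emeasure q {y. (x, y) \<in> A} \<partial>p)"
    by (simp add: vimage_def)
  also have "\<dots> \<le> (\<integral>\<^sup>+x. ennreal b \<partial>p)"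
    using assms
    by (intro nn_integral_mono_AE AE_pmfI) (simp add: measure_pmf.emeasure_eq_measure ennreal_leI)
  also have "\<dots> = ennreal b"
    by (simp add: measure_pmf.emeasure_space_1)
  finally show ?thesis
    using b_nonneg by (simp add: measure_pmf.emeasure_eq_measure)
qed

lemma measure_pmf_of_lessThan_le:
  assumes "0 < n" and "finite S" and "card S \<le> k"
  shows "measure_pmf.prob (pmf_of_set {..<(n::nat)}) S \<le> real k / real n"
proof -
  have "measure_pmf.prob (pmf_of_set {..<n}) S = real (card ({..<n} \<inter> S)) / real n"
    using assms(1) by (subst measure_pmf_of_set) auto
  moreover have "card ({..<n} \<inter> S) \<le> k"
    using card_mono[OF \<open>finite S\<close>, of "{..<n} \<inter> S"] assms(3) by auto
  ultimately show ?thesis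
    by (simp add: divide_right_mono)
qed

lemma prob_win_against_random_concentrated_hider:
  assumes "0 < n" and "0 < d" and "set_pmf \<sigma> \<subseteq> valid_searcher n k"
  shows "measure_pmf.prob (pair_pmf \<sigma> (map_pmf (concentrated_hider d) (pmf_of_set {..<n})))
           {(s, hc). searcher_wins d s hc} \<le> real k / real n"
proof (rule measure_pair_pmf_le)
  fix s assume "s \<in> set_pmf \<sigma>"
  then have s: "s [] \<subseteq> {..<n}" "card (s []) \<le> k"
    using assms(3) unfolding valid_searcher_def by blast+
  have "measure_pmf.prob (map_pmf (concentrated_hider d) (pmf_of_set {..<n}))
          {hc. (s, hc) \<in> {(s, hc). searcher_wins d s hc}}
        \<le> measure_pmf.prob (pmf_of_set {..<n}) (s [])"
    using assms(1,2) searcher_wins_concentrated_hider_imp_first_guess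
    by (auto intro!: measure_pmf.finite_measure_mono)
  also have "\<dots> \<le> real k / real n"
    using s assms(1) by (intro measure_pmf_of_lessThan_le) (auto intro: finite_subset)
  finally show "measure_pmf.prob (map_pmf (concentrated_hider d) (pmf_of_set {..<n}))
          {hc. (s, hc) \<in> {(s, hc). searcher_wins d s hc}} \<le> real k / real n" .
qed

theorem claim8:
  fixes n d k :: nat
  assumes "0 < n" and "0 < d" and "0 < k"
  shows "vM n d k \<le> real k / real n"
  unfolding vM_def
proof (rule cSUP_least)
  show "{\<sigma>. set_pmf \<sigma> \<subseteq> valid_searcher n k} \<noteq> {}"
    using valid_searcher_def by (auto intro!: exI[of _ "return_pmf (\<lambda>_. {})"])
next
  fix \<sigma> assume \<sigma>: "\<sigma> \<in> {\<sigma>. set_pmf \<sigma> \<subseteq> valid_searcher n k}"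
  let ?\<tau> = "map_pmf (concentrated_hider d) (pmf_of_set {..<n})"
  let ?win = "\<lambda>\<tau>. measure_pmf.prob (pair_pmf \<sigma> \<tau>) {(s, hc). searcher_wins d s hc}"
  have "set_pmf (pmf_of_set {..<n}) = {..<n}"
    using assms(1) by (intro set_pmf_of_set) auto
  then have "?\<tau> \<in> {\<tau>. set_pmf \<tau> \<subseteq> valid_hider n d}"
    by (simp add: image_subset_iff concentrated_hider_valid)
  then have "(INF \<tau>\<in>{\<tau>. set_pmf \<tau> \<subseteq> valid_hider n d}. ?win \<tau>) \<le> ?win ?\<tau>"
    by (intro cINF_lower bdd_belowI2[where m=0] measure_nonneg)
  also have "\<dots> \<le> real k / real n"
    using prob_win_against_random_concentrated_hider assms(1,2) \<sigma> by simp
  finally show "(INF \<tau>\<in>{\<tau>. set_pmf \<tau> \<subseteq> valid_hider n d}. ?win \<tau>) \<le> real k / real n" .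
qed

end
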